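(* Let $G$ be a nice graph, $V_4$ the set of vertices of degree at least four in $G$, $\mathcal{P}$ a path partition of $G$, and $\mathcal{P}_4\subseteq\mathcal{P}$ the subfamily of paths that visit at least one vertex of $V_4$. Then $\mathcal{P}_4$ admits a terminal collection of size at most $16\cdot\mathsf{high}(G)$, where $\mathsf{high}(G)=\sum_{v\in V_4}\deg_G(v)$.
   Context: All graphs are finite, simple and undirected; subcubic means maximum degree at most $3$. A path partition of $G$ is a collection of pairwise edge-disjoint paths whose edge sets together cover $E(G)$. A pan cycle of $G$ is a cycle containing a unique vertex of degree $3$ in $G$, all other vertices of it having degree $2$ in $G$; a bull cycle is a cycle containing exactly two vertices of degree $3$ in $G$, all others having degree $2$ in $G$. $G$ is nice if it is connected, not subcubic, has no pan cycles, and all its bull cycles are triangles. $N_G[S]$ denotes the closed neighbourhood of $S$. For a family $\mathcal{Q}$ of edge-disjoint paths in $G$, a set $U\subseteq V(G)$ is a terminal collection for $\mathcal{Q}$ if (1) $N_G[V_4]\subseteq U$; (2) both endpoints of every $P\in\mathcal{Q}$ belong to $U$; (3) for all $u,v\in U$, if two distinct paths $P_1,P_2\in\mathcal{Q}$ both visit $u$ and $v$, then at least one of $P_1,P_2$ visits some other vertex $w\in U$ between $u$ and $v$. *)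

theory Defs
  imports Main
begin

definition graph :: "'a set \<Rightarrow> 'a set set \<Rightarrow> bool" where
  "graph V E \<longleftrightarrow> finite V \<and> (\<forall>e\<in>E. e \<subseteq> V \<and> card e = 2)"

definition deg :: "'a set set \<Rightarrow> 'a \<Rightarrow> nat" where
  "deg E v = card {e\<in>E. v \<in> e}"

definition adj :: "'a set set \<Rightarrow> 'a \<Rightarrow> 'a \<Rightarrow> bool" where
  "adj E u v \<longleftrightarrow> {u, v} \<in> E"

definition connected_graph :: "'a set \<Rightarrow> 'a set set \<Rightarrow> bool" where
  "connected_graph V E \<longleftrightarrow> (\<forall>u\<in>V. \<forall>v\<in>V. (adj E)\<^sup>*\<^sup>* u v)"

definition subcubic :: "'a set \<Rightarrow> 'a set set \<Rightarrow> bool" where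
  "subcubic V E \<longleftrightarrow> (\<forall>v\<in>V. deg E v \<le> 3)"

definition is_cycle :: "'a set \<Rightarrow> 'a set set \<Rightarrow> 'a list \<Rightarrow> bool" where
  "is_cycle V E c \<longleftrightarrow> length c \<ge> 3 \<and> distinct c \<and> set c \<subseteq> V \<and>
     (\<forall>i < length c - 1. {c!i, c!(i+1)} \<in> E) \<and> {last c, hd c} \<in> E"

definition pan_cycle :: "'a set \<Rightarrow> 'a set set \<Rightarrow> 'a list \<Rightarrow> bool" where
  "pan_cycle V E c \<longleftrightarrow> is_cycle V E c \<and> card {v\<in>set c. deg E v = 3} = 1 \<and>
     (\<forall>v\<in>set c. deg E v = 2 \<or> deg E v = 3)"

definition bull_cycle :: "'a set \<Rightarrow> 'a set set \<Rightarrow> 'a list \<Rightarrow> bool" where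
  "bull_cycle V E c \<longleftrightarrow> is_cycle V E c \<and> card {v\<in>set c. deg E v = 3} = 2 \<and>
     (\<forall>v\<in>set c. deg E v = 2 \<or> deg E v = 3)"

definition nice :: "'a set \<Rightarrow> 'a set set \<Rightarrow> bool" where
  "nice V E \<longleftrightarrow> connected_graph V E \<and> \<not> subcubic V E \<and>
     (\<forall>c. \<not> pan_cycle V E c) \<and> (\<forall>c. bull_cycle V E c \<longrightarrow> length c = 3)"

definition is_path :: "'a set \<Rightarrow> 'a set set \<Rightarrow> 'a list \<Rightarrow> bool" where
  "is_path V E p \<longleftrightarrow> length p \<ge> 2 \<and> distinct p \<and> set p \<subseteq> V \<and>
     (\<forall>i < length p - 1. {p!i, p!(i+1)} \<in> E)"

definition path_edges :: "'a list \<Rightarrow> 'a set set" where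
  "path_edges p = {{p!i, p!(i+1)} | i. i < length p - 1}"

definition path_partition :: "'a set \<Rightarrow> 'a set set \<Rightarrow> 'a list set \<Rightarrow> bool" where
  "path_partition V E PP \<longleftrightarrow> (\<forall>p\<in>PP. is_path V E p) \<and>
     (\<forall>p\<in>PP. \<forall>q\<in>PP. p \<noteq> q \<longrightarrow> path_edges p \<inter> path_edges q = {}) \<and>
     \<Union>(path_edges ` PP) = E"

definition V4 :: "'a set \<Rightarrow> 'a set set \<Rightarrow> 'a set" where
  "V4 V E = {v\<in>V. deg E v \<ge> 4}"

definition closed_nbhd :: "'a set \<Rightarrow> 'a set set \<Rightarrow> 'a set \<Rightarrow> 'a set" where
  "closed_nbhd V E S = S \<union> {v\<in>V. \<exists>u\<in>S. {u, v} \<in> E}"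

definition high :: "'a set \<Rightarrow> 'a set set \<Rightarrow> nat" where
  "high V E = (\<Sum>v\<in>V4 V E. deg E v)"

definition between :: "'a list \<Rightarrow> 'a \<Rightarrow> 'a \<Rightarrow> 'a \<Rightarrow> bool" where
  "between p u v w \<longleftrightarrow> (\<exists>i j k. i < length p \<and> j < length p \<and> k < length p \<and>
     p!i = u \<and> p!j = v \<and> p!k = w \<and> min i j < k \<and> k < max i j)"

definition terminal_collection :: "'a set \<Rightarrow> 'a set set \<Rightarrow> 'a list set \<Rightarrow> 'a set \<Rightarrow> bool" where
  "terminal_collection V E Q U \<longleftrightarrow> U \<subseteq> V \<and>
     closed_nbhd V E (V4 V E) \<subseteq> U \<and>
     (\<forall>p\<in>Q. hd p \<in> U \<and> last p \<in> U) \<and>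
     (\<forall>u\<in>U. \<forall>v\<in>U. u \<noteq> v \<longrightarrow> (\<forall>p1\<in>Q. \<forall>p2\<in>Q.
        p1 \<noteq> p2 \<and> u \<in> set p1 \<and> v \<in> set p1 \<and> u \<in> set p2 \<and> v \<in> set p2 \<longrightarrow>
        (\<exists>w\<in>U. w \<noteq> u \<and> w \<noteq> v \<and> (between p1 u v w \<or> between p2 u v w))))"

end

theory Submission
  imports Defs
begin

(* Take U = N[V4 \<union> ends], ends being the endpoints of the paths in P4.  A vertex inner to
  two edge-disjoint paths meets four distinct edges, so a vertex shared by two paths of P4 lies
  in V4 \<union> ends.  For two such vertices u \<noteq> v, on each of the two paths the successor of the
  earlier of u, v is a neighbour of it, hence in U, and lies strictly between u and v unless uv
  is an edge of that path, which edge-disjointness allows for at most one of the two paths.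
  Every path of P4 has an edge at a vertex of V4 and distinct paths have distinct edges, so
  |P4| \<le> high(G); the vertices of ends outside V4 have degree at most 3, whence
  |U| \<le> \<Sum>\<^bsub>v \<in> V4\<^esub> (1 + deg v) + 4 |ends| \<le> 2 high(G) + 8 |P4| \<le> 10 high(G). *)

definition endpoints :: "'a list set \<Rightarrow> 'a set" where
  "endpoints Q = hd ` Q \<union> last ` Q"

lemma graph_finite_edges: "graph V E \<Longrightarrow> finite E"
  unfolding graph_def by (rule finite_subset[of E "Pow V"]) auto

lemma path_edges_nth: "Suc i < length p \<Longrightarrow> {p!i, p!Suc i} \<in> path_edges p"
  unfolding path_edges_def by auto

lemma is_path_path_edges_subset: "is_path V E p \<Longrightarrow> path_edges p \<subseteq> E"
  unfolding path_edges_def is_path_def by auto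

lemma is_path_hd_last_in: "is_path V E p \<Longrightarrow> hd p \<in> V \<and> last p \<in> V"
  unfolding is_path_def by (metis hd_in_set last_in_set list.size(3) not_numeral_le_zero subsetD)

lemma path_partition_is_path: "path_partition V E PP \<Longrightarrow> p \<in> PP \<Longrightarrow> is_path V E p"
  unfolding path_partition_def by blast

lemma path_partition_edges_disjoint:
  "path_partition V E PP \<Longrightarrow> p \<in> PP \<Longrightarrow> q \<in> PP \<Longrightarrow> p \<noteq> q
    \<Longrightarrow> path_edges p \<inter> path_edges q = {}"
  unfolding path_partition_def by blast

lemma path_partition_endpoints_subset:
  "path_partition V E PP \<Longrightarrow> Q \<subseteq> PP \<Longrightarrow> endpoints Q \<subseteq> V"
  unfolding endpoints_def using path_partition_is_path is_path_hd_last_in by blast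

lemma closed_nbhd_subset: "S \<subseteq> V \<Longrightarrow> closed_nbhd V E S \<subseteq> V"
  unfolding closed_nbhd_def by blast

lemma V4_subset: "V4 V E \<subseteq> V"
  unfolding V4_def by blast

lemma graph_finite_V4: "graph V E \<Longrightarrow> finite (V4 V E)"
  unfolding graph_def by (intro finite_subset[OF V4_subset]) blast

lemma path_edge_at_vertex:
  assumes "is_path V E p" and "v \<in> set p"
  shows "\<exists>e\<in>path_edges p. v \<in> e"
proof -
  obtain k where k: "k < length p" "p!k = v"
    using assms(2) by (auto simp: in_set_conv_nth)
  have "2 \<le> length p" using assms(1) by (simp add: is_path_def)
  then consider "Suc k < length p" | "0 < k"
    using k(1) by linarith
  then show ?thesis
  proof cases
    case 1
    then show ?thesis using path_edges_nth[of k p] k(2) by blast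
  next
    case 2
    then have "{p!(k - 1), v} \<in> path_edges p"
      using path_edges_nth[of "k - 1" p] k by simp
    then show ?thesis by blast
  qed
qed

lemma inner_vertex_two_path_edges:
  assumes "is_path V E p" and "x \<in> set p" and "x \<notin> {hd p, last p}"
  shows "\<exists>a b. a \<noteq> b \<and> {a, x} \<in> path_edges p \<and> {x, b} \<in> path_edges p"
proof -
  obtain i where i: "i < length p" "p!i = x"
    using assms(2) by (auto simp: in_set_conv_nth)
  have "p \<noteq> []" using i by auto
  then have "hd p = p!0" "last p = p!(length p - 1)"
    by (simp_all add: hd_conv_nth last_conv_nth)
  then have "i \<noteq> 0" "i \<noteq> length p - 1"
    using i(2) assms(3) by (cases i; auto)+
  then have inner: "0 < i" "Suc i < length p" and i_pred: "Suc (i - 1) = i"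
    using i by auto
  have "p!(i - 1) \<noteq> p!Suc i"
    using assms(1) inner unfolding is_path_def by (simp add: nth_eq_iff_index_eq)
  moreover have "{p!(i - 1), x} \<in> path_edges p"
    using path_edges_nth[of "i - 1" p] inner i_pred i(2) by simp
  moreover have "{x, p!Suc i} \<in> path_edges p"
    using path_edges_nth[OF inner(2)] i(2) by simp
  ultimately show ?thesis by blast
qed

lemma four_le_deg_if_inner_vertex_of_two_paths:
  assumes "finite E" and "is_path V E p" and "is_path V E q"
    and "path_edges p \<inter> path_edges q = {}"
    and "x \<in> set p" "x \<notin> {hd p, last p}" and "x \<in> set q" "x \<notin> {hd q, last q}"
  shows "4 \<le> deg E x"
proof -
  obtain a b where ab: "a \<noteq> b" "{a, x} \<in> path_edges p" "{x, b} \<in> path_edges p"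
    using inner_vertex_two_path_edges[OF assms(2,5,6)] by blast
  obtain c d where cd: "c \<noteq> d" "{c, x} \<in> path_edges q" "{x, d} \<in> path_edges q"
    using inner_vertex_two_path_edges[OF assms(3,7,8)] by blast
  have "{a, x} \<noteq> {x, b}" "{c, x} \<noteq> {x, d}"
    using ab(1) cd(1) by (auto simp: doubleton_eq_iff)
  moreover have "{a, x} \<noteq> {c, x}" "{a, x} \<noteq> {x, d}" "{x, b} \<noteq> {c, x}" "{x, b} \<noteq> {x, d}"
    using ab(2,3) cd(2,3) assms(4) by (metis disjoint_iff)+
  ultimately have four: "card {{a, x}, {x, b}, {c, x}, {x, d}} = 4"
    by simp
  have "{{a, x}, {x, b}, {c, x}, {x, d}} \<subseteq> {e\<in>E. x \<in> e}"
    using ab cd is_path_path_edges_subset[OF assms(2)] is_path_path_edges_subset[OF assms(3)]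
    by blast
  moreover have "finite {e\<in>E. x \<in> e}"
    using assms(1) by simp
  ultimately show ?thesis
    unfolding deg_def using card_mono four by metis
qed

lemma card_closed_nbhd_le:
  assumes "finite S" and "finite E"
  shows "card (closed_nbhd V E S) \<le> (\<Sum>x\<in>S. 1 + deg E x)"
proof -
  have nbhd_card: "finite {w. {x, w} \<in> E} \<and> card {w. {x, w} \<in> E} \<le> deg E x" for x
  proof -
    have inj: "inj_on (\<lambda>w. {x, w}) {w. {x, w} \<in> E}"
      by (auto simp: inj_on_def doubleton_eq_iff)
    have image: "(\<lambda>w. {x, w}) ` {w. {x, w} \<in> E} \<subseteq> {e\<in>E. x \<in> e}" by auto
    have "finite {e\<in>E. x \<in> e}" using assms(2) by simp
    then show ?thesis
      unfolding deg_def
      using finite_imageD[OF finite_subset[OF image] inj] card_inj_on_le[OF inj image] by blast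
  qed
  have "closed_nbhd V E S \<subseteq> (\<Union>x\<in>S. insert x {w. {x, w} \<in> E})"
    by (auto simp: closed_nbhd_def)
  then have "card (closed_nbhd V E S) \<le> card (\<Union>x\<in>S. insert x {w. {x, w} \<in> E})"
    using assms(1) nbhd_card by (intro card_mono) auto
  also have "\<dots> \<le> (\<Sum>x\<in>S. card (insert x {w. {x, w} \<in> E}))"
    using assms(1) by (rule card_UN_le)
  also have "\<dots> \<le> (\<Sum>x\<in>S. 1 + deg E x)"
  proof (rule sum_mono)
    show "card (insert x {w. {x, w} \<in> E}) \<le> 1 + deg E x" for x
      using nbhd_card[of x] by (simp add: card_insert_if)
  qed
  finally show ?thesis .
qed

lemma card_paths_through:
  assumes "finite E" and "path_partition V E PP" and "finite S"
  defines "Q \<equiv> {p\<in>PP. \<exists>v\<in>S. v \<in> set p}"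
  shows "finite Q" and "card Q \<le> (\<Sum>v\<in>S. deg E v)"
proof -
  define F where "F = (\<Union>v\<in>S. {e\<in>E. v \<in> e})"
  have "\<exists>e. e \<in> path_edges p \<and> e \<in> F" if "p \<in> Q" for p
  proof -
    from \<open>p \<in> Q\<close> obtain v where v: "v \<in> S" "v \<in> set p" and p: "is_path V E p"
      using path_partition_is_path[OF assms(2)] unfolding Q_def by blast
    then obtain e where "e \<in> path_edges p" "v \<in> e"
      using path_edge_at_vertex[OF p v(2)] by blast
    then show ?thesis
      using is_path_path_edges_subset[OF p] v(1) unfolding F_def by blast
  qed
  then obtain f where f: "\<And>p. p \<in> Q \<Longrightarrow> f p \<in> path_edges p \<and> f p \<in> F"
    by metis
  have inj: "inj_on f Q"
  proof (rule inj_onI)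
    fix p q assume "p \<in> Q" "q \<in> Q" "f p = f q"
    then have "f p \<in> path_edges p \<inter> path_edges q"
      using f[of p] f[of q] by simp
    then show "p = q"
      using path_partition_edges_disjoint[OF assms(2)] \<open>p \<in> Q\<close> \<open>q \<in> Q\<close>
      unfolding Q_def by blast
  qed
  have image: "f ` Q \<subseteq> F"
    using f by blast
  have "finite F"
    using assms(1,3) unfolding F_def by simp
  then show "finite Q"
    using finite_imageD[OF finite_subset[OF image] inj] by blast
  have "card Q \<le> card F"
    using card_inj_on_le[OF inj image \<open>finite F\<close>] .
  also have "\<dots> \<le> (\<Sum>v\<in>S. deg E v)"
    unfolding F_def deg_def using assms(3) by (rule card_UN_le)
  finally show "card Q \<le> (\<Sum>v\<in>S. deg E v)" .
qed

lemma between_or_path_edge: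
  assumes "is_path V E p" and "u \<in> set p" "v \<in> set p" "u \<noteq> v" and "u \<in> S" "v \<in> S"
  shows "{u, v} \<in> path_edges p \<or> (\<exists>w\<in>closed_nbhd V E S. w \<noteq> u \<and> w \<noteq> v \<and> between p u v w)"
proof -
  obtain i j where i: "i < length p" "p!i = u" and j: "j < length p" "p!j = v"
    using assms(2,3) by (auto simp: in_set_conv_nth)
  define m where "m = min i j"
  have "i \<noteq> j" using i j assms(4) by auto
  then have m: "Suc m < length p" "p!m \<in> S"
    using i j assms(5,6) by (auto simp: m_def min_def)
  show ?thesis
  proof (cases "Suc m < max i j")
    case True
    define w where "w = p!Suc m"
    have "{p!m, w} \<in> E" "w \<in> V"
      using path_edges_nth[OF m(1)] is_path_path_edges_subset[OF assms(1)] assms(1) m(1)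
      unfolding w_def is_path_def by auto
    then have "w \<in> closed_nbhd V E S"
      using m(2) unfolding closed_nbhd_def by blast
    moreover have "w \<noteq> u" "w \<noteq> v"
      using assms(1) i j m(1) True unfolding w_def m_def is_path_def
      by (auto simp: nth_eq_iff_index_eq)
    moreover have "between p u v w"
      unfolding between_def using i j m(1) True
      by (intro exI[of _ i] exI[of _ j] exI[of _ "Suc m"]) (auto simp: m_def w_def)
    ultimately show ?thesis by blast
  next
    case False
    then have "Suc m = max i j"
      using \<open>i \<noteq> j\<close> unfolding m_def by (cases "i \<le> j") (simp_all add: min_def max_def)
    then have "{p!m, p!Suc m} = {u, v}"
      using i(2) j(2) unfolding m_def by (cases "i \<le> j") (auto simp: max_def)
    then show ?thesis
      using path_edges_nth[OF m(1)] by simp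
  qed
qed

lemma inner_vertex_of_two_paths_in_V4:
  assumes "finite E" and "path_partition V E PP" and "p \<in> PP" "q \<in> PP" "p \<noteq> q"
    and "x \<in> set p" "x \<notin> {hd p, last p}" and "x \<in> set q" "x \<notin> {hd q, last q}"
  shows "x \<in> V4 V E"
proof -
  have p: "is_path V E p" and q: "is_path V E q"
    using path_partition_is_path assms(2-4) by blast+
  have "4 \<le> deg E x"
    using four_le_deg_if_inner_vertex_of_two_paths[OF assms(1) p q
        path_partition_edges_disjoint[OF assms(2-5)] assms(6-9)] .
  moreover have "x \<in> V"
    using p assms(6) unfolding is_path_def by blast
  ultimately show ?thesis
    unfolding V4_def by blast
qed

lemma terminal_collection_closed_nbhd_V4_endpoints:
  assumes "finite E" and "path_partition V E PP" and "Q \<subseteq> PP"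
  shows "terminal_collection V E Q (closed_nbhd V E (V4 V E \<union> endpoints Q))"
proof -
  let ?B = "V4 V E \<union> endpoints Q"
  let ?U = "closed_nbhd V E ?B"
  have shared: "x \<in> ?B" if "p \<in> Q" "q \<in> Q" "p \<noteq> q" "x \<in> set p" "x \<in> set q" for p q x
  proof (rule ccontr)
    assume "x \<notin> ?B"
    then have "x \<notin> {hd p, last p}" "x \<notin> {hd q, last q}"
      using that(1,2) unfolding endpoints_def by auto
    moreover have "p \<in> PP" "q \<in> PP"
      using that(1,2) assms(3) by blast+
    ultimately have "x \<in> V4 V E"
      using inner_vertex_of_two_paths_in_V4[OF assms(1,2)] that(3-5) by blast
    with \<open>x \<notin> ?B\<close> show False by blast
  qed
  have separated: "\<exists>w\<in>?U. w \<noteq> u \<and> w \<noteq> v \<and> (between p u v w \<or> between q u v w)"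
    if "u \<noteq> v" "p \<in> Q" "q \<in> Q"
      "p \<noteq> q \<and> u \<in> set p \<and> v \<in> set p \<and> u \<in> set q \<and> v \<in> set q" for u v p q
  proof -
    have B: "u \<in> ?B" "v \<in> ?B"
      using shared[OF that(2,3)] that(4) by blast+
    have "p \<in> PP" "q \<in> PP"
      using that(2,3) assms(3) by blast+
    then have "{u, v} \<in> path_edges p \<or> (\<exists>w\<in>?U. w \<noteq> u \<and> w \<noteq> v \<and> between p u v w)"
      and "{u, v} \<in> path_edges q \<or> (\<exists>w\<in>?U. w \<noteq> u \<and> w \<noteq> v \<and> between q u v w)"
      and "path_edges p \<inter> path_edges q = {}"
      using between_or_path_edge[OF path_partition_is_path[OF assms(2)] _ _ that(1) B] that(4)
        path_partition_edges_disjoint[OF assms(2)]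
      by blast+
    then show ?thesis by blast
  qed
  have "?U \<subseteq> V"
    using V4_subset path_partition_endpoints_subset[OF assms(2,3)]
    by (intro closed_nbhd_subset Un_least)
  moreover have "closed_nbhd V E (V4 V E) \<subseteq> ?U" "\<forall>p\<in>Q. hd p \<in> ?U \<and> last p \<in> ?U"
    unfolding closed_nbhd_def endpoints_def by auto
  ultimately show ?thesis
    unfolding terminal_collection_def using separated by blast
qed

lemma card_closed_nbhd_V4_endpoints_le:
  assumes "graph V E" and "finite Q" and "endpoints Q \<subseteq> V"
  shows "card (closed_nbhd V E (V4 V E \<union> endpoints Q)) \<le> 2 * high V E + 8 * card Q"
proof -
  define D where "D = endpoints Q - V4 V E"
  have fin_V4: "finite (V4 V E)"
    using graph_finite_V4[OF assms(1)] .
  have fin_ends: "finite (endpoints Q)"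
    unfolding endpoints_def using assms(2) by simp
  then have fin_D: "finite D"
    unfolding D_def by simp
  have "card D \<le> card (endpoints Q)"
    unfolding D_def using fin_ends by (rule card_mono) blast
  also have "\<dots> \<le> card (hd ` Q) + card (last ` Q)"
    unfolding endpoints_def by (rule card_Un_le)
  also have "\<dots> \<le> 2 * card Q"
    using card_image_le[OF assms(2), of hd] card_image_le[OF assms(2), of last] by linarith
  finally have card_D: "card D \<le> 2 * card Q" .
  have low_deg: "1 + deg E x \<le> 4" if "x \<in> D" for x
    using that assms(3) unfolding D_def V4_def by auto
  have "V4 V E \<union> endpoints Q = V4 V E \<union> D"
    unfolding D_def by blast
  then have "card (closed_nbhd V E (V4 V E \<union> endpoints Q)) \<le> (\<Sum>x\<in>V4 V E \<union> D. 1 + deg E x)"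
    using card_closed_nbhd_le[of "V4 V E \<union> D" E V] fin_V4 fin_D graph_finite_edges[OF assms(1)]
    by simp
  also have "\<dots> = (\<Sum>x\<in>V4 V E. 1 + deg E x) + (\<Sum>x\<in>D. 1 + deg E x)"
    using fin_V4 fin_D by (rule sum.union_disjoint) (simp add: D_def)
  also have "\<dots> \<le> (\<Sum>x\<in>V4 V E. 2 * deg E x) + (\<Sum>x\<in>D. 4)"
    using low_deg by (intro add_mono sum_mono) (auto simp: V4_def)
  also have "\<dots> \<le> 2 * high V E + 8 * card Q"
    using card_D by (simp add: high_def sum_distrib_left)
  finally show ?thesis .
qed

theorem lemma13:
  fixes V :: "'a set" and E :: "'a set set" and PP :: "'a list set"
  assumes "graph V E" and "nice V E" and "path_partition V E PP"
  shows "\<exists>U. terminal_collection V E {p\<in>PP. \<exists>v\<in>V4 V E. v \<in> set p} U \<and>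
             card U \<le> 16 * high V E"
proof -
  define Q where "Q = {p\<in>PP. \<exists>v\<in>V4 V E. v \<in> set p}"
  have fin_E: "finite E"
    using graph_finite_edges[OF assms(1)] .
  have "finite (V4 V E)"
    using graph_finite_V4[OF assms(1)] .
  then have fin_Q: "finite Q" and card_Q: "card Q \<le> high V E"
    unfolding Q_def high_def using card_paths_through[OF fin_E assms(3)] by blast+
  have "Q \<subseteq> PP"
    unfolding Q_def by blast
  define U where "U = closed_nbhd V E (V4 V E \<union> endpoints Q)"
  have "terminal_collection V E Q U"
    unfolding U_def
    using terminal_collection_closed_nbhd_V4_endpoints[OF fin_E assms(3) \<open>Q \<subseteq> PP\<close>] .
  moreover have "card U \<le> 2 * high V E + 8 * card Q"
    unfolding U_def using card_closed_nbhd_V4_endpoints_le[OF assms(1) fin_Q]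
      path_partition_endpoints_subset[OF assms(3) \<open>Q \<subseteq> PP\<close>] by blast
  ultimately show ?thesis
    using card_Q unfolding Q_def by auto
qed

end
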